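(* Let $\mathcal G=(\mathcal V,\mathcal E)$ be a weakly connected digraph and let $e$ be a tight edge of $\mathcal G$. Then $\gamma(\mathcal G+e)=\gamma(\mathcal G)-1$, where $\mathcal G+e=(\mathcal V,\mathcal E\cup\{e\})$.
   Context: For a strongly connected component (SCC) $\mathcal S$ of a digraph $(\mathcal V,\mathcal E)$, let $\mathcal O_{\mathcal S}=\{(u,v)\in\mathcal E:u\in\mathcal S,v\notin\mathcal S\}$ and $\mathcal I_{\mathcal S}=\{(u,v)\in\mathcal E:u\notin\mathcal S,v\in\mathcal S\}$. $\mathcal S$ is a source SCC (s-SCC) if $\mathcal O_{\mathcal S}\neq\emptyset$ and $\mathcal I_{\mathcal S}=\emptyset$, and a target SCC (t-SCC) if $\mathcal O_{\mathcal S}=\emptyset$ and $\mathcal I_{\mathcal S}\neq\emptyset$. $\gamma(\mathcal G)$ is the maximum of the number of s-SCCs and the number of t-SCCs of $\mathcal G$. Write $a\rightsquigarrow b$ if there is a directed path from $a$ to $b$. If $\mathcal G$ has $\alpha$ s-SCCs and $\beta$ t-SCCs, an edge $(t,s)\in(\mathcal V\times\mathcal V)\setminus\mathcal E$ is tight if: (i) $s$ belongs to an s-SCC; (ii) $t$ belongs to a t-SCC; (iii) either $\alpha=1$ or there is $s'$ in an s-SCC different from that of $s$ with $s'\rightsquigarrow t$; (iv) either $\beta=1$ or there is $t'$ in a t-SCC different from that of $t$ with $s\rightsquigarrow t'$. *)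

theory Defs
  imports Main
begin

definition digraph :: "'a set \<Rightarrow> ('a \<times> 'a) set \<Rightarrow> bool" where
  "digraph V E \<longleftrightarrow> finite V \<and> E \<subseteq> V \<times> V"

definition weakly_connected :: "'a set \<Rightarrow> ('a \<times> 'a) set \<Rightarrow> bool" where
  "weakly_connected V E \<longleftrightarrow> (\<forall>u\<in>V. \<forall>v\<in>V. (u, v) \<in> (E \<union> E\<inverse>)\<^sup>*)"

definition reach :: "('a \<times> 'a) set \<Rightarrow> 'a \<Rightarrow> 'a \<Rightarrow> bool" where
  "reach E a b \<longleftrightarrow> (a, b) \<in> E\<^sup>*"

definition scc_of :: "('a \<times> 'a) set \<Rightarrow> 'a \<Rightarrow> 'a set" where
  "scc_of E u = {v. reach E u v \<and> reach E v u}"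

definition SCCs :: "'a set \<Rightarrow> ('a \<times> 'a) set \<Rightarrow> 'a set set" where
  "SCCs V E = scc_of E ` V"

definition out_edges :: "('a \<times> 'a) set \<Rightarrow> 'a set \<Rightarrow> ('a \<times> 'a) set" where
  "out_edges E S = {(u, v) \<in> E. u \<in> S \<and> v \<notin> S}"

definition in_edges :: "('a \<times> 'a) set \<Rightarrow> 'a set \<Rightarrow> ('a \<times> 'a) set" where
  "in_edges E S = {(u, v) \<in> E. u \<notin> S \<and> v \<in> S}"

definition sSCCs :: "'a set \<Rightarrow> ('a \<times> 'a) set \<Rightarrow> 'a set set" where
  "sSCCs V E = {S \<in> SCCs V E. out_edges E S \<noteq> {} \<and> in_edges E S = {}}"

definition tSCCs :: "'a set \<Rightarrow> ('a \<times> 'a) set \<Rightarrow> 'a set set" where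
  "tSCCs V E = {S \<in> SCCs V E. out_edges E S = {} \<and> in_edges E S \<noteq> {}}"

definition gamma :: "'a set \<Rightarrow> ('a \<times> 'a) set \<Rightarrow> nat" where
  "gamma V E = max (card (sSCCs V E)) (card (tSCCs V E))"

definition tight_edge :: "'a set \<Rightarrow> ('a \<times> 'a) set \<Rightarrow> 'a \<times> 'a \<Rightarrow> bool" where
  "tight_edge V E e \<longleftrightarrow> (case e of (t, s) \<Rightarrow>
     (t, s) \<in> (V \<times> V) - E
     \<and> (\<exists>S\<in>sSCCs V E. s \<in> S)
     \<and> (\<exists>T\<in>tSCCs V E. t \<in> T)
     \<and> (card (sSCCs V E) = 1 \<or>
          (\<exists>S'\<in>sSCCs V E. \<exists>s'\<in>S'. s \<notin> S' \<and> reach E s' t))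
     \<and> (card (tSCCs V E) = 1 \<or>
          (\<exists>T'\<in>tSCCs V E. \<exists>t'\<in>T'. t \<notin> T' \<and> reach E s t')))"

end

theory Submission
  imports Defs
begin

text \<open>Write the new edge as \<open>(t, s)\<close>, with \<open>s\<close> in a source component \<open>S\<close> and \<open>t\<close> in a
  target component \<open>T\<close>. If \<open>s\<close> does not reach \<open>t\<close>, the components stay the same, \<open>S\<close>
  acquires an incoming and \<open>T\<close> an outgoing edge, and both counts drop by one. If \<open>s\<close>
  reaches \<open>t\<close>, the components on paths from \<open>s\<close> to \<open>t\<close>, among them \<open>S\<close> and \<open>T\<close>, merge
  into one component \<open>C\<close>, and every other component keeps its edges and its status.
  By condition (iii) some other source reaches \<open>t\<close>, so \<open>C\<close> has an incoming edge, unless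
  \<open>S\<close> was the only source; in that case weak connectivity makes \<open>s\<close> reach every vertex,
  so \<open>C\<close> has no incoming edge and is not a target. Dually for (iv). So each count drops
  by one, except that a count equal to one may stay one while the other count, being at
  least two, drops by one; either way the maximum drops by one. Reversing all edges swaps
  sources and targets and preserves tightness, so only the sources need to be counted.\<close>

lemma reach_refl [simp]: "reach E a a"
  unfolding reach_def by simp

lemma reach_trans: "reach E a b \<Longrightarrow> reach E b c \<Longrightarrow> reach E a c"
  unfolding reach_def by simp

lemma reach_edge: "(a, b) \<in> E \<Longrightarrow> reach E a b"
  unfolding reach_def by simp

lemma reach_insert_edge:
  "reach (insert (t, s) E) a b \<longleftrightarrow> reach E a b \<or> (reach E a t \<and> reach E s b)"
  unfolding reach_def by (simp add: rtrancl_insert)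

lemma reach_converse: "reach (E\<inverse>) a b \<longleftrightarrow> reach E b a"
  unfolding reach_def by (simp add: rtrancl_converse)

lemma reach_start_in_vertices: "E \<subseteq> V \<times> V \<Longrightarrow> reach E a b \<Longrightarrow> b \<in> V \<Longrightarrow> a \<in> V"
  unfolding reach_def by (erule converse_rtranclE) auto

lemma mem_scc_of [simp]: "x \<in> scc_of E x"
  unfolding scc_of_def by simp

lemma scc_of_eq: "y \<in> scc_of E x \<Longrightarrow> scc_of E y = scc_of E x"
  unfolding scc_of_def by (auto intro: reach_trans)

lemma SCCs_eq_scc_of: "X \<in> SCCs V E \<Longrightarrow> x \<in> X \<Longrightarrow> X = scc_of E x"
  unfolding SCCs_def by (metis imageE scc_of_eq)

lemma finite_sSCCs: "finite V \<Longrightarrow> finite (sSCCs V E)"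
  unfolding sSCCs_def SCCs_def by simp

lemma finite_tSCCs: "finite V \<Longrightarrow> finite (tSCCs V E)"
  unfolding tSCCs_def SCCs_def by simp

lemma sSCCs_tSCCs_disjoint: "sSCCs V E \<inter> tSCCs V E = {}"
  unfolding sSCCs_def tSCCs_def by blast

lemma in_edges_empty_reach_mem:
  assumes "in_edges E X = {}" "reach E a b" "b \<in> X"
  shows "a \<in> X"
  using assms(2,3) unfolding reach_def
proof (induction rule: converse_rtrancl_induct)
  case base
  then show ?case .
next
  case (step a c)
  then show ?case using assms(1) unfolding in_edges_def by blast
qed

lemma out_edges_scc_of_reached_by_all:
  assumes "E \<subseteq> V \<times> V" "\<forall>u\<in>V. reach E u x"
  shows "out_edges E (scc_of E x) = {}"
  using assms unfolding out_edges_def scc_of_def by (blast intro: reach_trans reach_edge)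

section \<open>Reversing all edges\<close>

lemma scc_of_converse [simp]: "scc_of (E\<inverse>) = scc_of E"
  unfolding scc_of_def reach_converse by blast

lemma SCCs_converse [simp]: "SCCs V (E\<inverse>) = SCCs V E"
  unfolding SCCs_def by simp

lemma out_edges_converse [simp]: "out_edges (E\<inverse>) X = (in_edges E X)\<inverse>"
  unfolding out_edges_def in_edges_def by blast

lemma in_edges_converse [simp]: "in_edges (E\<inverse>) X = (out_edges E X)\<inverse>"
  unfolding out_edges_def in_edges_def by blast

lemma sSCCs_converse [simp]: "sSCCs V (E\<inverse>) = tSCCs V E"
  unfolding sSCCs_def tSCCs_def by auto

lemma tSCCs_converse [simp]: "tSCCs V (E\<inverse>) = sSCCs V E"
  unfolding sSCCs_def tSCCs_def by auto

lemma digraph_converse: "digraph V E \<Longrightarrow> digraph V (E\<inverse>)"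
  unfolding digraph_def by blast

lemma weakly_connected_converse: "weakly_connected V E \<Longrightarrow> weakly_connected V (E\<inverse>)"
  unfolding weakly_connected_def by (simp add: Un_commute)

lemma tight_edge_converse: "tight_edge V E (t, s) \<Longrightarrow> tight_edge V (E\<inverse>) (s, t)"
  unfolding tight_edge_def by (auto simp: reach_converse)

section \<open>Components without incoming edges\<close>

lemma exists_scc_without_in_edges_reaching:
  assumes "finite V" "E \<subseteq> V \<times> V" "u \<in> V"
  obtains w where "w \<in> V" "reach E w u" "in_edges E (scc_of E w) = {}"
proof -
  let ?anc = "\<lambda>w. {z. reach E z w}"
  have finite_anc: "finite (?anc w)" for w
    by (rule finite_subset[of _ "insert w V"])
      (use assms(1,2) in \<open>auto simp: reach_def elim: converse_rtranclE\<close>)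
  obtain w where "reach E w u" and least: "\<And>y. reach E y u \<Longrightarrow> card (?anc w) \<le> card (?anc y)"
    using ex_has_least_nat[of "\<lambda>w. reach E w u" u "\<lambda>w. card (?anc w)"] by auto
  \<comment> \<open>An ancestor of \<open>u\<close> with fewest ancestors lies in the same component as all of them.\<close>
  have "reach E w z" if "reach E z w" for z
  proof -
    have "?anc z \<subseteq> ?anc w"
      using that by (auto intro: reach_trans)
    moreover have "card (?anc w) \<le> card (?anc z)"
      using least reach_trans[OF that \<open>reach E w u\<close>] .
    ultimately have "?anc z = ?anc w"
      by (rule card_seteq[OF finite_anc])
    then show ?thesis by auto
  qed
  then have "in_edges E (scc_of E w) = {}"
    unfolding in_edges_def scc_of_def by (blast intro: reach_trans reach_edge)
  moreover have "w \<in> V"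
    using reach_start_in_vertices[OF assms(2) \<open>reach E w u\<close> assms(3)] .
  ultimately show thesis
    using that \<open>reach E w u\<close> by blast
qed

lemma weakly_connected_no_boundary_edges:
  assumes "weakly_connected V E" "out_edges E X = {}" "in_edges E X = {}" "x \<in> X" "x \<in> V"
  shows "V \<subseteq> X"
proof
  fix y assume "y \<in> V"
  then have "(x, y) \<in> (E \<union> E\<inverse>)\<^sup>*"
    using assms(1,5) unfolding weakly_connected_def by blast
  then show "y \<in> X"
  proof (induction rule: rtrancl_induct)
    case base
    then show ?case using assms(4) .
  next
    case (step y z)
    then show ?case using assms(2,3) unfolding out_edges_def in_edges_def by blast
  qed
qed

lemma unique_sSCC_reaches_all:
  assumes "digraph V E" "weakly_connected V E" "sSCCs V E = {S}" "x \<in> S" "u \<in> V"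
  shows "reach E x u"
proof -
  have "finite V" "E \<subseteq> V \<times> V"
    using assms(1) unfolding digraph_def by auto
  then obtain w where "w \<in> V" "reach E w u" and no_in: "in_edges E (scc_of E w) = {}"
    using exists_scc_without_in_edges_reaching assms(5) by metis
  have "S = scc_of E w"
  proof (cases "out_edges E (scc_of E w) = {}")
    case True
    have "S \<in> SCCs V E"
      using assms(3) unfolding sSCCs_def by blast
    then obtain y where "y \<in> V" "S = scc_of E y"
      unfolding SCCs_def by blast
    moreover have "y \<in> scc_of E w"
      using weakly_connected_no_boundary_edges[OF assms(2) True no_in mem_scc_of \<open>w \<in> V\<close>]
        \<open>y \<in> V\<close> by blast
    ultimately show ?thesis by (simp add: scc_of_eq)
  next
    case False
    then have "scc_of E w \<in> sSCCs V E"
      using no_in \<open>w \<in> V\<close> unfolding sSCCs_def SCCs_def by blast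
    then show ?thesis using assms(3) by blast
  qed
  then have "reach E x w"
    using assms(4) unfolding scc_of_def by blast
  then show ?thesis using \<open>reach E w u\<close> by (rule reach_trans)
qed

lemma unique_tSCC_reached_by_all:
  assumes "digraph V E" "weakly_connected V E" "tSCCs V E = {T}" "x \<in> T" "u \<in> V"
  shows "reach E u x"
  using unique_sSCC_reaches_all[OF digraph_converse[OF assms(1)]
      weakly_connected_converse[OF assms(2)]] assms(3-5)
  by (simp add: reach_converse)

section \<open>Adding one edge\<close>

lemma scc_of_insert_edge:
  "\<not> (reach E s x \<and> reach E x t) \<Longrightarrow> scc_of (insert (t, s) E) x = scc_of E x"
  unfolding scc_of_def reach_insert_edge by (auto intro: reach_trans)

lemma scc_of_insert_edge_merge:
  "reach E s t \<Longrightarrow> scc_of (insert (t, s) E) t = scc_of (insert (t, s) E) s"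
  by (rule scc_of_eq) (auto simp: scc_of_def reach_insert_edge)

lemma out_edges_insert_edge:
  "s \<notin> X \<Longrightarrow> t \<notin> X \<Longrightarrow> out_edges (insert (t, s) E) X = out_edges E X"
  unfolding out_edges_def by auto

lemma in_edges_insert_edge:
  "s \<notin> X \<Longrightarrow> t \<notin> X \<Longrightarrow> in_edges (insert (t, s) E) X = in_edges E X"
  unfolding in_edges_def by auto

lemma sSCCs_insert_edge_Diff:
  fixes E :: "('a \<times> 'a) set" and s t :: 'a
  defines "E' \<equiv> insert (t, s) E"
  shows "sSCCs V E' - {scc_of E' s, scc_of E' t} = sSCCs V E - {scc_of E s, scc_of E t}"
proof (intro equalityI subsetI)
  fix X assume X: "X \<in> sSCCs V E' - {scc_of E' s, scc_of E' t}"
  then obtain x where "x \<in> V" and X_eq: "X = scc_of E' x"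
    unfolding sSCCs_def SCCs_def by blast
  have "s \<notin> X" "t \<notin> X"
    using X unfolding X_eq by (auto dest: scc_of_eq)
  moreover have "\<not> (reach E s x \<and> reach E x t)"
    using \<open>s \<notin> X\<close> unfolding X_eq E'_def scc_of_def reach_insert_edge by auto
  then have "X = scc_of E x"
    unfolding X_eq E'_def by (rule scc_of_insert_edge)
  ultimately show "X \<in> sSCCs V E - {scc_of E s, scc_of E t}"
    using X \<open>x \<in> V\<close> unfolding sSCCs_def SCCs_def E'_def
    by (auto simp: out_edges_insert_edge in_edges_insert_edge)
next
  fix X assume X: "X \<in> sSCCs V E - {scc_of E s, scc_of E t}"
  then obtain x where "x \<in> V" and X_eq: "X = scc_of E x"
    unfolding sSCCs_def SCCs_def by blast
  have "s \<notin> X" "t \<notin> X"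
    using X unfolding X_eq by (auto dest: scc_of_eq)
  moreover have "\<not> reach E s x"
    using in_edges_empty_reach_mem[of E X s x] X X_eq \<open>s \<notin> X\<close> unfolding sSCCs_def by auto
  then have "X = scc_of E' x"
    unfolding X_eq E'_def by (simp add: scc_of_insert_edge)
  ultimately show "X \<in> sSCCs V E' - {scc_of E' s, scc_of E' t}"
    using X \<open>x \<in> V\<close> unfolding sSCCs_def SCCs_def E'_def
    by (auto simp: out_edges_insert_edge in_edges_insert_edge)
qed

lemma source_scc_of_insert_edge_imp_reach:
  fixes E :: "('a \<times> 'a) set" and s t :: 'a
  defines "E' \<equiv> insert (t, s) E"
  assumes "scc_of E t \<in> tSCCs V E" "x \<in> {s, t}" "scc_of E' x \<in> sSCCs V E'"
  shows "reach E s t"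
proof (rule ccontr)
  assume "\<not> reach E s t"
  then have "scc_of E' x = scc_of E x"
    unfolding E'_def by (intro scc_of_insert_edge) (use assms(3) in auto)
  moreover have "in_edges E' (scc_of E x) \<noteq> {}"
  proof (cases "x = s")
    case True
    then have "(t, s) \<in> in_edges E' (scc_of E x)"
      using \<open>\<not> reach E s t\<close> unfolding in_edges_def scc_of_def E'_def by simp
    then show ?thesis by blast
  next
    case False
    then have "in_edges E (scc_of E x) \<noteq> {}"
      using assms(2,3) unfolding tSCCs_def by auto
    then show ?thesis
      unfolding in_edges_def E'_def by blast
  qed
  ultimately show False
    using assms(4) unfolding sSCCs_def by simp
qed

section \<open>Adding a tight edge\<close>

lemma tight_edge_components:
  assumes "tight_edge V E (t, s)"
  shows "s \<in> V" "t \<in> V" "scc_of E s \<in> sSCCs V E" "scc_of E t \<in> tSCCs V E"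
  using assms unfolding tight_edge_def sSCCs_def tSCCs_def
  by (auto dest: SCCs_eq_scc_of)

lemma source_scc_of_insert_tight_edge:
  fixes E :: "('a \<times> 'a) set" and s t :: 'a
  defines "E' \<equiv> insert (t, s) E"
  assumes "digraph V E" "weakly_connected V E" "tight_edge V E (t, s)"
    and source: "scc_of E' s \<in> sSCCs V E'"
  shows "card (sSCCs V E) = 1" "card (tSCCs V E) \<noteq> 1"
proof -
  note comps = tight_edge_components[OF assms(4)]
  have "reach E s t"
    using source_scc_of_insert_edge_imp_reach[OF comps(4), of s] source unfolding E'_def by simp
  then have t_in: "t \<in> scc_of E' s"
    unfolding E'_def scc_of_def reach_insert_edge by simp
  show "card (sSCCs V E) = 1"
  proof (rule ccontr)
    assume "card (sSCCs V E) \<noteq> 1"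
    then obtain S' s' where S': "S' \<in> sSCCs V E" "s' \<in> S'" "s \<notin> S'" "reach E s' t"
      using assms(4) unfolding tight_edge_def by blast
    have "s' \<notin> scc_of E' s"
    proof
      assume "s' \<in> scc_of E' s"
      then have "reach E s s'"
        unfolding scc_of_def E'_def reach_insert_edge by blast
      then show False
        using in_edges_empty_reach_mem[of E S' s s'] S' unfolding sSCCs_def by blast
    qed
    moreover have "reach E' s' t"
      using S'(4) unfolding E'_def reach_insert_edge by simp
    ultimately have "in_edges E' (scc_of E' s) \<noteq> {}"
      using in_edges_empty_reach_mem[of E' "scc_of E' s" s' t] t_in by blast
    then show False
      using source unfolding sSCCs_def by simp
  qed
  show "card (tSCCs V E) \<noteq> 1"
  proof
    assume "card (tSCCs V E) = 1"
    then obtain T where "tSCCs V E = {T}"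
      by (rule card_1_singletonE)
    then have "tSCCs V E = {scc_of E t}"
      using comps(4) by simp
    then have "reach E u t" if "u \<in> V" for u
      using unique_tSCC_reached_by_all[OF assms(2,3) _ mem_scc_of that] by blast
    then have "\<forall>u\<in>V. reach E' u s"
      unfolding E'_def reach_insert_edge by simp
    moreover have "E' \<subseteq> V \<times> V"
      using assms(2) comps(1,2) unfolding digraph_def E'_def by blast
    ultimately have "out_edges E' (scc_of E' s) = {}"
      by (intro out_edges_scc_of_reached_by_all)
    then show False
      using source unfolding sSCCs_def by simp
  qed
qed

lemma card_sSCCs_insert_tight_edge:
  fixes E :: "('a \<times> 'a) set" and s t :: 'a
  defines "E' \<equiv> insert (t, s) E"
  assumes "digraph V E" "weakly_connected V E" "tight_edge V E (t, s)"
  shows "card (sSCCs V E') \<le> card (sSCCs V E)"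
    and "card (sSCCs V E) \<noteq> 1 \<or> card (tSCCs V E) = 1 \<Longrightarrow>
      card (sSCCs V E') = card (sSCCs V E) - 1"
proof -
  note comps = tight_edge_components[OF assms(4)]
  define new where "new = sSCCs V E' \<inter> {scc_of E' s, scc_of E' t}"
  have finite: "finite (sSCCs V E)"
    using assms(2) finite_sSCCs unfolding digraph_def by blast
  have "sSCCs V E' - {scc_of E' s, scc_of E' t} = sSCCs V E - {scc_of E s, scc_of E t}"
    unfolding E'_def by (rule sSCCs_insert_edge_Diff)
  also have "\<dots> = sSCCs V E - {scc_of E s}"
    using comps(4) sSCCs_tSCCs_disjoint by blast
  finally have split: "sSCCs V E' = (sSCCs V E - {scc_of E s}) \<union> new"
    unfolding new_def by blast
  have new_sub: "new \<subseteq> {scc_of E' s}"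
  proof
    fix X assume "X \<in> new"
    then obtain x where x: "x \<in> {s, t}" and X: "X = scc_of E' x" "X \<in> sSCCs V E'"
      unfolding new_def by blast
    have "reach E s t"
      using source_scc_of_insert_edge_imp_reach[OF comps(4) x] X unfolding E'_def by simp
    then have "scc_of E' t = scc_of E' s"
      unfolding E'_def by (rule scc_of_insert_edge_merge)
    then show "X \<in> {scc_of E' s}"
      using x X by auto
  qed
  have "card (sSCCs V E') \<le> card (sSCCs V E - {scc_of E s}) + card new"
    unfolding split by (rule card_Un_le)
  also have "\<dots> \<le> card (sSCCs V E - {scc_of E s}) + 1"
    using card_mono[OF _ new_sub] by simp
  also have "\<dots> = card (sSCCs V E)"
    using card.remove[OF finite comps(3)] by simp
  finally show "card (sSCCs V E') \<le> card (sSCCs V E)" .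
  assume "card (sSCCs V E) \<noteq> 1 \<or> card (tSCCs V E) = 1"
  then have "scc_of E' s \<notin> sSCCs V E'"
    using source_scc_of_insert_tight_edge(1,2)[OF assms(2-4)] unfolding E'_def by auto
  with new_sub have "new = {}"
    unfolding new_def by auto
  then show "card (sSCCs V E') = card (sSCCs V E) - 1"
    unfolding split using comps(3) finite by (simp add: card_Diff_singleton)
qed

theorem proposition1:
  fixes V :: "'a set" and E :: "('a \<times> 'a) set" and e :: "'a \<times> 'a"
  assumes "digraph V E"
    and "weakly_connected V E"
    and "tight_edge V E e"
  shows "gamma V (insert e E) = gamma V E - 1"
proof -
  obtain t s where e: "e = (t, s)"
    by fastforce
  have reversed: "insert (s, t) (E\<inverse>) = (insert (t, s) E)\<inverse>"
    by blast
  note sources = card_sSCCs_insert_tight_edge[OF assms(1,2) assms(3)[unfolded e]]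
  note targets = card_sSCCs_insert_tight_edge[OF digraph_converse[OF assms(1)]
      weakly_connected_converse[OF assms(2)] tight_edge_converse[OF assms(3)[unfolded e]],
      unfolded reversed sSCCs_converse tSCCs_converse]
  note comps = tight_edge_components[OF assms(3)[unfolded e]]
  have "finite V"
    using assms(1) unfolding digraph_def by blast
  then have "card (sSCCs V E) \<noteq> 0" "card (tSCCs V E) \<noteq> 0"
    using comps(3,4) finite_sSCCs[of V E] finite_tSCCs[of V E] by auto
  then show ?thesis
    unfolding gamma_def e using sources targets by linarith
qed

end
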